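(* Let $\mathbf{h}\in\mathbb{C}^{n}$ be a fixed vector and $\bar{\mathbf{A}}\in\mathbb{C}^{m\times n}$ a random matrix with i.i.d. elements of zero mean and unit variance. Let $\mathbf{v}\sim\mathcal{CN}(\mathbf{0}_{m},\mathbf{I}_{m})$ be independent of $\bar{\mathbf{A}}$, $\mathbf{y}=\bar{\mathbf{A}}\mathbf{h}+\mathbf{v}$, and $\hat{\mathbf{y}}=\mathrm{Q}(\mathbf{y})$, where $\mathrm{Q}$ is an $\infty$-bit quantizer with uniform quantization intervals of width $\Delta>0$, applied elementwise to real and imaginary parts. Let $\mathcal{CV}\subseteq\{1,\dots,m\}$, $\mathcal{CV}_{\mathrm{R}}=\mathcal{CV}\cup(\mathcal{CV}+m)$, and for $\hat{\mathbf{h}}\in\mathbb{C}^{n}$ let $$\ell_{\mathcal{CV}}(\hat{\mathbf{h}})=\sum_{i\in\mathcal{CV}_{\mathrm{R}}}\log\left(\Phi\left(\frac{\hat{y}_{\mathrm{R},i}^{\mathrm{up}}-\bar{\mathbf{a}}_{\mathrm{R},i}^{\mathrm{T}}\hat{\mathbf{h}}_{\mathrm{R}}}{\sqrt{1/2}}\right)-\Phi\left(\frac{\hat{y}_{\mathrm{R},i}^{\mathrm{lo}}-\bar{\mathbf{a}}_{\mathrm{R},i}^{\mathrm{T}}\hat{\mathbf{h}}_{\mathrm{R}}}{\sqrt{1/2}}\right)\right),$$ and let $f_{\mathcal{CV}}(\hat{\mathbf{h}})$ be the limit in probability of $\frac{1}{2|\mathcal{CV}|}\ell_{\mathcal{CV}}(\hat{\mathbf{h}})$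 as $|\mathcal{CV}|\to\infty$. Then $$f_{\mathcal{CV}}(\hat{\mathbf{h}})=-\|\hat{\mathbf{h}}-\mathbf{h}\|^{2}-\frac{1}{2}\log \pi e+\log\Delta+\mathcal{O}(\Delta)$$ as $\Delta\to 0$.
   Context: $\Phi$ is the CDF of $\mathcal{N}(0,1)$; logarithms are natural. Real forms: for a complex vector $\mathbf{x}$, $\mathbf{x}_{\mathrm{R}}=[\mathrm{Re}(\mathbf{x})^{\mathrm{T}},\mathrm{Im}(\mathbf{x})^{\mathrm{T}}]^{\mathrm{T}}$; for a complex matrix $\mathbf{X}$, $\mathbf{X}_{\mathrm{R}}=\begin{bmatrix}\mathrm{Re}(\mathbf{X})&-\mathrm{Im}(\mathbf{X})\\\mathrm{Im}(\mathbf{X})&\mathrm{Re}(\mathbf{X})\end{bmatrix}$; $\bar{\mathbf{a}}_{\mathrm{R},i}$ is the transpose of the $i$-th row of $\bar{\mathbf{A}}_{\mathrm{R}}$. The $\infty$-bit uniform quantizer partitions $\mathbb{R}$ into intervals $[j\Delta,(j+1)\Delta)$, $j\in\mathbb{Z}$ (up to an offset), each mapped to a fixed quantization point; for each real entry, $\hat{y}_{\mathrm{R},i}^{\mathrm{lo}}$ and $\hat{y}_{\mathrm{R},i}^{\mathrm{up}}$ are the lower and upper endpoints of the interval containing $y_{\mathrm{R},i}$. Each real/imaginary noise component has variance $1/2$. *)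

theory Defs
  imports "HOL-Probability.Probability" "HOL-Library.Landau_Symbols"
begin

definition Phi :: "real \<Rightarrow> real" where
  "Phi x = measure (density lborel std_normal_density) {..x}"

text \<open>Infinite-bit uniform quantizer with step Delta and offset c: the cell containing x
  is [c + j Delta, c + (j+1) Delta). qlo / qup are its lower / upper endpoints.\<close>
definition qlo :: "real \<Rightarrow> real \<Rightarrow> real \<Rightarrow> real" where
  "qlo Delta c x = c + Delta * of_int \<lfloor>(x - c) / Delta\<rfloor>"

definition qup :: "real \<Rightarrow> real \<Rightarrow> real \<Rightarrow> real" where
  "qup Delta c x = qlo Delta c x + Delta"

text \<open>One summand of the log-likelihood: x is the real entry y_{R,i}, t = abar_{R,i}^T hhat_R.\<close>
definition llterm :: "real \<Rightarrow> real \<Rightarrow> real \<Rightarrow> real \<Rightarrow> real" where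
  "llterm Delta c x t =
     ln (Phi ((qup Delta c x - t) / sqrt (1/2)) - Phi ((qlo Delta c x - t) / sqrt (1/2)))"

definition rowmul :: "(nat \<Rightarrow> 'n::finite \<Rightarrow> complex) \<Rightarrow> nat \<Rightarrow> complex ^ 'n \<Rightarrow> complex" where
  "rowmul A i x = (\<Sum>j\<in>UNIV. A i j * x $ j)"

text \<open>The real-form index set CV_R = CV \<union> (CV + m):
  index i \<in> CV refers to the real part of row i, index i+m to its imaginary part;
  abar_{R,i}^T hhat_R = Re((A hhat)_i) and abar_{R,i+m}^T hhat_R = Im((A hhat)_i).\<close>
definition ell :: "real \<Rightarrow> real \<Rightarrow> (nat \<Rightarrow> 'n::finite \<Rightarrow> complex) \<Rightarrow> (nat \<Rightarrow> complex)
                   \<Rightarrow> complex ^ 'n \<Rightarrow> complex ^ 'n \<Rightarrow> nat set \<Rightarrow> real" where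
  "ell Delta c A v h hh CV =
     (\<Sum>i\<in>CV. llterm Delta c (Re (rowmul A i h + v i)) (Re (rowmul A i hh))
             + llterm Delta c (Im (rowmul A i h + v i)) (Im (rowmul A i hh)))"

definition conv_in_prob :: "'a measure \<Rightarrow> (nat \<Rightarrow> 'a \<Rightarrow> real) \<Rightarrow> real \<Rightarrow> bool" where
  "conv_in_prob M X L \<longleftrightarrow> (\<forall>k. X k \<in> borel_measurable M) \<and>
     (\<forall>e>0. (\<lambda>k. measure M {\<omega>\<in>space M. \<bar>X k \<omega> - L\<bar> > e}) \<longlonglongrightarrow> 0)"

end

theory Submission
  imports Defs
begin

text \<open>Each summand of the log-likelihood is the log-probability of a quantization cell of width
  Delta under a Gaussian of variance 1/2. Over the cell the density varies only by a factor
  1 + O(Delta (1 + r)), so the summand is ln Delta - ln pi / 2 - r^2 up to O(Delta (1 + r^2)),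
  where r is the real or imaginary part of the residual y_i - (A hh)_i = (A (h - hh))_i + v_i.
  Hence ell_CV / (2 |CV|) is sandwiched between two affine functions of the empirical mean of
  the squared residuals |(A (h - hh))_i + v_i|^2, which all have expectation
  2 |h - hh|^2 + 1 by independence. A limit in probability inherits both bounds: the lower one
  by Markov's inequality, the upper one because the squared residuals are uniformly integrable
  (they are dominated by identically distributed variables), so that their averages exceed
  any level below the mean with probability bounded away from zero. Since
  ln (pi e) / 2 = ln pi / 2 + 1/2, this is the claimed expansion.\<close>

section \<open>Gaussian probabilities of quantization cells\<close>

lemma Phi_diff_eq_integral:
  assumes "a \<le> b"
  shows "Phi b - Phi a = (LINT x:{a<..b}|lborel. std_normal_density x)"
proof -
  interpret N: prob_space "density lborel std_normal_density"
    using prob_space_normal_density by simp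
  have int: "integrable lborel (\<lambda>x. indicator {a<..b} x * std_normal_density x)"
    using integrable_mult_indicator[of "{a<..b}" lborel std_normal_density] by simp
  have "Phi b - Phi a = measure (density lborel std_normal_density) ({..b} - {..a})"
    unfolding Phi_def using assms by (subst N.finite_measure_Diff) auto
  also have "{..b} - {..a} = {a<..b}"
    by auto
  also have "emeasure (density lborel std_normal_density) {a<..b}
      = (\<integral>\<^sup>+ x. ennreal (indicator {a<..b} x * std_normal_density x) \<partial>lborel)"
    by (subst emeasure_density) (auto intro!: nn_integral_cong split: split_indicator)
  then have "measure (density lborel std_normal_density) {a<..b}
      = (LINT x:{a<..b}|lborel. std_normal_density x)"
    unfolding measure_def set_lebesgue_integral_def
    by (simp add: nn_integral_eq_integral[OF int] integral_nonneg_AE)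
  finally show ?thesis .
qed

lemma Phi_diff_bounds:
  assumes "a < b"
    and "\<And>x. x \<in> {a<..b} \<Longrightarrow> lo \<le> std_normal_density x"
    and "\<And>x. x \<in> {a<..b} \<Longrightarrow> std_normal_density x \<le> hi"
  shows "(b - a) * lo \<le> Phi b - Phi a" and "Phi b - Phi a \<le> (b - a) * hi"
proof -
  have int: "set_integrable lborel {a<..b} std_normal_density"
    unfolding set_integrable_def
    using integrable_mult_indicator[of "{a<..b}" lborel std_normal_density] by simp
  have const: "set_integrable lborel {a<..b} (\<lambda>_. y)" "(LINT x:{a<..b}|lborel. y) = (b - a) * y"
    for y :: real
  proof -
    have fin: "emeasure lborel {a<..b} \<noteq> \<infinity>"
      using assms(1) by simp
    show "set_integrable lborel {a<..b} (\<lambda>_. y)"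
      unfolding set_integrable_def using fin by (intro integrable_indicator) (auto simp: top.not_eq_extremum)
    show "(LINT x:{a<..b}|lborel. y) = (b - a) * y"
      using assms(1) set_integral_const[of "{a<..b}" lborel y] fin by simp
  qed
  show "(b - a) * lo \<le> Phi b - Phi a"
    using set_integral_mono[OF const(1) int assms(2)]
    by (simp add: Phi_diff_eq_integral assms(1) less_imp_le const(2))
  show "Phi b - Phi a \<le> (b - a) * hi"
    using set_integral_mono[OF int const(1) assms(3)]
    by (simp add: Phi_diff_eq_integral assms(1) less_imp_le const(2))
qed

lemma std_normal_density_shift:
  "std_normal_density u = std_normal_density u0 * exp ((u0\<^sup>2 - u\<^sup>2) / 2)"
proof -
  have "- (u\<^sup>2 / 2) = - (u0\<^sup>2 / 2) + (u0\<^sup>2 - u\<^sup>2) / 2"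
    by (simp add: field_simps)
  then show ?thesis
    by (simp add: std_normal_density_def flip: exp_add)
qed

text \<open>On a cell of width w containing u0, the Gaussian density varies by a factor of at most
  exp (w (2 |u0| + w) / 2), because |u^2 - u0^2| = |u - u0| |u + u0|.\<close>
lemma ln_Phi_diff_approx:
  assumes "u1 < u2" "u1 \<le> u0" "u0 \<le> u2"
  shows "\<bar>ln (Phi u2 - Phi u1) - ln ((u2 - u1) * std_normal_density u0)\<bar>
           \<le> (u2 - u1) * (2 * \<bar>u0\<bar> + (u2 - u1)) / 2"
proof -
  define b where "b = (u2 - u1) * (2 * \<bar>u0\<bar> + (u2 - u1))"
  define p where "p = std_normal_density u0"
  have p: "p > 0"
    unfolding p_def by (rule normal_density_pos) simp
  have sq: "\<bar>u\<^sup>2 - u0\<^sup>2\<bar> \<le> b" if "u \<in> {u1<..u2}" for u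
  proof -
    have "\<bar>u\<^sup>2 - u0\<^sup>2\<bar> = \<bar>u - u0\<bar> * \<bar>u + u0\<bar>"
      by (simp add: power2_eq_square algebra_simps flip: abs_mult)
    also have "\<dots> \<le> (u2 - u1) * (2 * \<bar>u0\<bar> + (u2 - u1))"
      using that assms by (intro mult_mono) auto
    finally show ?thesis
      unfolding b_def .
  qed
  have lo: "p * exp (- b / 2) \<le> std_normal_density u"
    and hi: "std_normal_density u \<le> p * exp (b / 2)" if "u \<in> {u1<..u2}" for u
    unfolding std_normal_density_shift[of u u0] p_def[symmetric]
    using sq[OF that] p by (auto intro!: mult_left_mono)
  have "(u2 - u1) * (p * exp (- b / 2)) \<le> Phi u2 - Phi u1"
    by (rule Phi_diff_bounds(1)[OF assms(1) lo hi])
  moreover have "Phi u2 - Phi u1 \<le> (u2 - u1) * (p * exp (b / 2))"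
    by (rule Phi_diff_bounds(2)[OF assms(1) lo hi])
  moreover have "0 < (u2 - u1) * (p * exp (- b / 2))"
    using assms p by simp
  ultimately have "ln ((u2 - u1) * (p * exp (- b / 2))) \<le> ln (Phi u2 - Phi u1)"
      "ln (Phi u2 - Phi u1) \<le> ln ((u2 - u1) * (p * exp (b / 2)))"
    by (metis ln_le_cancel_iff order.strict_trans2)+
  moreover have ln_scale: "ln ((u2 - u1) * (p * exp (s / 2))) = ln ((u2 - u1) * p) + s / 2" for s
    using assms p by (simp add: ln_mult)
  ultimately show ?thesis
    unfolding b_def[symmetric] p_def[symmetric] abs_le_iff
    using ln_scale[of "- b"] ln_scale[of b] by linarith
qed

lemma qlo_le:
  assumes "D > 0"
  shows "qlo D c x \<le> x"
proof -
  have "of_int \<lfloor>(x - c) / D\<rfloor> \<le> (x - c) / D"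
    by (rule of_int_floor_le)
  from mult_left_mono[OF this, of D] show ?thesis
    using assms by (simp add: qlo_def)
qed

lemma less_qup:
  assumes "D > 0"
  shows "x < qup D c x"
proof -
  have "(x - c) / D < of_int \<lfloor>(x - c) / D\<rfloor> + 1"
    by (rule real_of_int_floor_add_one_gt)
  then show ?thesis
    using assms by (simp add: qup_def qlo_def field_simps)
qed

text \<open>In units of the noise standard deviation sqrt (1/2) the cell has width D sqrt 2, and
  sqrt 2 / sqrt (2 pi) = 1 / sqrt pi.\<close>
lemma llterm_approx:
  fixes D c x t :: real
  assumes D: "D > 0"
  shows "\<bar>llterm D c x t - (ln D - ln pi / 2 - (x - t)\<^sup>2)\<bar> \<le> D * (2 * \<bar>x - t\<bar> + D)"
proof -
  define lo where "lo = qlo D c x"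
  define u1 where "u1 = (lo - t) * sqrt 2"
  define u2 where "u2 = (lo + D - t) * sqrt 2"
  define u0 where "u0 = (x - t) * sqrt 2"
  have scale: "y / sqrt (1 / 2) = y * sqrt 2" for y :: real
    by (simp add: real_sqrt_divide)
  have "u1 < u2" "u1 \<le> u0" "u0 \<le> u2"
    using D qlo_le[OF D, of c x] less_qup[OF D, of x c]
    by (simp_all add: u0_def u1_def u2_def lo_def qup_def)
  note approx = ln_Phi_diff_approx[OF this]
  have "llterm D c x t = ln (Phi u2 - Phi u1)"
    by (simp add: llterm_def qup_def scale u1_def u2_def lo_def)
  moreover have "u0\<^sup>2 = 2 * (x - t)\<^sup>2"
    by (simp add: u0_def power_mult_distrib)
  then have "(u2 - u1) * std_normal_density u0 = D / sqrt pi * exp (- (x - t)\<^sup>2)"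
    by (simp add: u1_def u2_def std_normal_density_def real_sqrt_mult algebra_simps)
  then have "ln ((u2 - u1) * std_normal_density u0) = ln D - ln pi / 2 - (x - t)\<^sup>2"
    using D by (simp add: ln_mult ln_div ln_sqrt)
  moreover have "\<bar>u0\<bar> = \<bar>x - t\<bar> * sqrt 2"
    by (simp add: u0_def abs_mult)
  then have "(u2 - u1) * (2 * \<bar>u0\<bar> + (u2 - u1)) / 2 = D * (2 * \<bar>x - t\<bar> + D)"
    by (simp add: u1_def u2_def algebra_simps)
  ultimately show ?thesis
    using approx by simp
qed

lemma llterm_bounds:
  fixes D c x t :: real
  assumes D: "D > 0"
  shows "ln D - ln pi / 2 - D - D\<^sup>2 - (1 + D) * (x - t)\<^sup>2 \<le> llterm D c x t"
    and "llterm D c x t \<le> ln D - ln pi / 2 + D + D\<^sup>2 - (1 - D) * (x - t)\<^sup>2"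
proof -
  have "2 * \<bar>x - t\<bar> \<le> 1 + (x - t)\<^sup>2"
    using zero_le_power2[of "\<bar>x - t\<bar> - 1"] by (simp add: power2_eq_square algebra_simps)
  then have "D * (2 * \<bar>x - t\<bar>) \<le> D * (1 + (x - t)\<^sup>2)"
    using D by (intro mult_left_mono) auto
  then have "D * (2 * \<bar>x - t\<bar> + D) \<le> D + D * (x - t)\<^sup>2 + D\<^sup>2"
    by (simp add: ring_distribs power2_eq_square)
  then show "ln D - ln pi / 2 - D - D\<^sup>2 - (1 + D) * (x - t)\<^sup>2 \<le> llterm D c x t"
      and "llterm D c x t \<le> ln D - ln pi / 2 + D + D\<^sup>2 - (1 - D) * (x - t)\<^sup>2"
    using llterm_approx[OF D, where c=c and x=x and t=t] by (simp_all add: abs_le_iff algebra_simps)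
qed

lemma rowmul_diff: "rowmul A i (x - y) = rowmul A i x - rowmul A i y"
  by (simp add: rowmul_def right_diff_distrib sum_subtractf)

lemma ell_bounds:
  fixes A :: "nat \<Rightarrow> 'n::finite \<Rightarrow> complex" and v :: "nat \<Rightarrow> complex" and h hh :: "complex ^ 'n"
  assumes D: "D > 0"
  defines "W i \<equiv> (cmod (rowmul A i (h - hh) + v i))\<^sup>2"
  shows "real (card CV) * (2 * (ln D - ln pi / 2 - D - D\<^sup>2)) - (1 + D) * (\<Sum>i\<in>CV. W i)
           \<le> ell D c A v h hh CV"
    and "ell D c A v h hh CV
           \<le> real (card CV) * (2 * (ln D - ln pi / 2 + D + D\<^sup>2)) - (1 - D) * (\<Sum>i\<in>CV. W i)"
proof -
  have W: "W i = (Re (rowmul A i h + v i) - Re (rowmul A i hh))\<^sup>2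
      + (Im (rowmul A i h + v i) - Im (rowmul A i hh))\<^sup>2" for i
    by (simp add: W_def rowmul_diff cmod_power2 algebra_simps)
  have pair_lo: "2 * (ln D - ln pi / 2 - D - D\<^sup>2) - (1 + D) * ((x1 - t1)\<^sup>2 + (x2 - t2)\<^sup>2)
      \<le> llterm D c x1 t1 + llterm D c x2 t2" for x1 t1 x2 t2
    using add_mono[OF llterm_bounds(1)[OF D] llterm_bounds(1)[OF D]] by (simp add: algebra_simps)
  have pair_hi: "llterm D c x1 t1 + llterm D c x2 t2
      \<le> 2 * (ln D - ln pi / 2 + D + D\<^sup>2) - (1 - D) * ((x1 - t1)\<^sup>2 + (x2 - t2)\<^sup>2)" for x1 t1 x2 t2
    using add_mono[OF llterm_bounds(2)[OF D] llterm_bounds(2)[OF D]] by (simp add: algebra_simps)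
  have sum_affine: "(\<Sum>i\<in>CV. a - b * W i) = real (card CV) * a - b * (\<Sum>i\<in>CV. W i)" for a b
    by (simp add: sum_subtractf sum_distrib_left)
  have "(\<Sum>i\<in>CV. 2 * (ln D - ln pi / 2 - D - D\<^sup>2) - (1 + D) * W i) \<le> ell D c A v h hh CV"
    unfolding ell_def W by (intro sum_mono pair_lo)
  then show "real (card CV) * (2 * (ln D - ln pi / 2 - D - D\<^sup>2)) - (1 + D) * (\<Sum>i\<in>CV. W i)
      \<le> ell D c A v h hh CV"
    unfolding sum_affine .
  have "ell D c A v h hh CV \<le> (\<Sum>i\<in>CV. 2 * (ln D - ln pi / 2 + D + D\<^sup>2) - (1 - D) * W i)"
    unfolding ell_def W by (intro sum_mono pair_hi)
  then show "ell D c A v h hh CV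
      \<le> real (card CV) * (2 * (ln D - ln pi / 2 + D + D\<^sup>2)) - (1 - D) * (\<Sum>i\<in>CV. W i)"
    unfolding sum_affine .
qed

lemma ell_average_bounds:
  fixes A :: "nat \<Rightarrow> 'n::finite \<Rightarrow> complex" and v :: "nat \<Rightarrow> complex" and h hh :: "complex ^ 'n"
  assumes D: "D > 0" and k: "k \<ge> 1"
  defines "Z \<equiv> (\<Sum>i<k. (cmod (rowmul A i (h - hh) + v i))\<^sup>2) / real k"
  shows "ln D - ln pi / 2 - D - D\<^sup>2 - (1 + D) / 2 * Z \<le> ell D c A v h hh {..<k} / (2 * real k)"
    and "ell D c A v h hh {..<k} / (2 * real k) \<le> ln D - ln pi / 2 + D + D\<^sup>2 - (1 - D) / 2 * Z"
proof -
  have avg: "(real k * (2 * a) - b * (\<Sum>i<k. (cmod (rowmul A i (h - hh) + v i))\<^sup>2)) / (2 * real k)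
      = a - b / 2 * Z" for a b
    using k by (simp add: Z_def field_simps)
  have "real (card {..<k}) * (2 * (ln D - ln pi / 2 - D - D\<^sup>2))
      - (1 + D) * (\<Sum>i\<in>{..<k}. (cmod (rowmul A i (h - hh) + v i))\<^sup>2) \<le> ell D c A v h hh {..<k}"
    by (rule ell_bounds(1)[OF D])
  from divide_right_mono[OF this, of "2 * real k"]
  show "ln D - ln pi / 2 - D - D\<^sup>2 - (1 + D) / 2 * Z \<le> ell D c A v h hh {..<k} / (2 * real k)"
    by (simp only: card_lessThan avg)
  have "ell D c A v h hh {..<k} \<le> real (card {..<k}) * (2 * (ln D - ln pi / 2 + D + D\<^sup>2))
      - (1 - D) * (\<Sum>i\<in>{..<k}. (cmod (rowmul A i (h - hh) + v i))\<^sup>2)"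
    by (rule ell_bounds(2)[OF D])
  from divide_right_mono[OF this, of "2 * real k"]
  show "ell D c A v h hh {..<k} / (2 * real k) \<le> ln D - ln pi / 2 + D + D\<^sup>2 - (1 - D) / 2 * Z"
    by (simp only: card_lessThan avg)
qed

section \<open>Second moments of sums of independent variables\<close>

lemma (in prob_space) indep_vars_imp_indep_var:
  assumes "indep_vars N X I" "a \<in> I" "b \<in> I" "a \<noteq> b"
  shows "indep_var (N a) (X a) (N b) (X b)"
proof -
  have "indep_var (N a) ((\<lambda>f. f a) \<circ> (\<lambda>\<omega>. restrict (\<lambda>i. X i \<omega>) {a}))
                  (N b) ((\<lambda>f. f b) \<circ> (\<lambda>\<omega>. restrict (\<lambda>i. X i \<omega>) {b}))"
    using assms
    by (intro indep_var_compose[OF indep_var_restrict[OF assms(1)]] measurable_component_singleton)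
      auto
  then show ?thesis
    by (simp add: comp_def)
qed

lemma (in prob_space) indep_var_expectation_mult_cnj:
  fixes X Y :: "'a \<Rightarrow> complex"
  assumes indep: "indep_var borel X borel Y"
    and int: "integrable M X" "integrable M Y" and mean: "expectation X = 0"
  shows "integrable M (\<lambda>\<omega>. X \<omega> * cnj (Y \<omega>))" and "expectation (\<lambda>\<omega>. X \<omega> * cnj (Y \<omega>)) = 0"
proof -
  have "cnj \<in> borel_measurable borel"
    by (intro borel_measurable_continuous_onI continuous_intros)
  then have indep_cnj: "indep_var borel X borel (\<lambda>\<omega>. cnj (Y \<omega>))"
    using indep_var_compose[OF indep, of id borel cnj borel] by (simp add: comp_def)
  have "integrable M (\<lambda>\<omega>. cnj (Y \<omega>))"
    using int(2) by simp
  then show "integrable M (\<lambda>\<omega>. X \<omega> * cnj (Y \<omega>))" "expectation (\<lambda>\<omega>. X \<omega> * cnj (Y \<omega>)) = 0"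
    using indep_var_integrable[OF indep_cnj int(1)] indep_var_lebesgue_integral[OF indep_cnj int(1)] mean
    by simp_all
qed

lemma norm_sum_square_eq_Re_double_sum:
  fixes z :: "'i \<Rightarrow> complex"
  shows "(cmod (\<Sum>s\<in>S. z s))\<^sup>2 = Re (\<Sum>s\<in>S. \<Sum>t\<in>S. z s * cnj (z t))"
proof -
  have "complex_of_real ((cmod (\<Sum>s\<in>S. z s))\<^sup>2) = (\<Sum>s\<in>S. \<Sum>t\<in>S. z s * cnj (z t))"
    unfolding complex_norm_square cnj_sum sum_product ..
  then show ?thesis
    by (metis Re_complex_of_real)
qed

text \<open>Pythagoras: the cross terms E (X s * cnj (X t)) vanish by independence.\<close>
lemma (in prob_space) expectation_norm_sum_square_indep:
  fixes X :: "'i \<Rightarrow> 'a \<Rightarrow> complex" and c :: "'i \<Rightarrow> complex"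
  assumes S: "finite S"
    and indep: "\<And>s t. s \<in> S \<Longrightarrow> t \<in> S \<Longrightarrow> s \<noteq> t \<Longrightarrow> indep_var borel (X s) borel (X t)"
    and int: "\<And>s. s \<in> S \<Longrightarrow> integrable M (X s)"
    and mean: "\<And>s. s \<in> S \<Longrightarrow> expectation (X s) = 0"
    and sq: "\<And>s. s \<in> S \<Longrightarrow> integrable M (\<lambda>\<omega>. (cmod (X s \<omega>))\<^sup>2)"
  shows "integrable M (\<lambda>\<omega>. (cmod (\<Sum>s\<in>S. c s * X s \<omega>))\<^sup>2)"
    and "expectation (\<lambda>\<omega>. (cmod (\<Sum>s\<in>S. c s * X s \<omega>))\<^sup>2)
           = (\<Sum>s\<in>S. (cmod (c s))\<^sup>2 * expectation (\<lambda>\<omega>. (cmod (X s \<omega>))\<^sup>2))"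
proof -
  define P where "P s t = (\<lambda>\<omega>. X s \<omega> * cnj (X t \<omega>))" for s t
  have P_diag: "P s s = (\<lambda>\<omega>. complex_of_real ((cmod (X s \<omega>))\<^sup>2))" for s
    by (simp add: P_def complex_norm_square del: of_real_power)
  have P: "integrable M (P s t) \<and> expectation (P s t)
      = (if s = t then complex_of_real (expectation (\<lambda>\<omega>. (cmod (X s \<omega>))\<^sup>2)) else 0)"
    if "s \<in> S" "t \<in> S" for s t
    using sq[OF that(1)] indep_var_expectation_mult_cnj[OF indep[OF that] int[OF that(1)] int[OF that(2)]
        mean[OF that(1)]]
    by (cases "s = t") (simp_all add: P_diag P_def del: of_real_power)
  have expand: "(cmod (\<Sum>s\<in>S. c s * X s \<omega>))\<^sup>2 = Re (\<Sum>s\<in>S. \<Sum>t\<in>S. (c s * cnj (c t)) * P s t \<omega>)"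
    for \<omega>
    by (simp add: norm_sum_square_eq_Re_double_sum P_def ac_simps)
  have int_sum: "integrable M (\<lambda>\<omega>. \<Sum>s\<in>S. \<Sum>t\<in>S. (c s * cnj (c t)) * P s t \<omega>)"
    using P by (intro Bochner_Integration.integrable_sum integrable_mult_right) auto
  then show "integrable M (\<lambda>\<omega>. (cmod (\<Sum>s\<in>S. c s * X s \<omega>))\<^sup>2)"
    unfolding expand by (rule integrable_Re)
  have "expectation (\<lambda>\<omega>. (cmod (\<Sum>s\<in>S. c s * X s \<omega>))\<^sup>2)
      = Re (\<Sum>s\<in>S. \<Sum>t\<in>S. (c s * cnj (c t)) * expectation (P s t))"
    unfolding expand integral_Re[OF int_sum, unfolded comp_def]
    using P by (subst Bochner_Integration.integral_sum; simp add: Bochner_Integration.integral_sum)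
  also have "(\<Sum>s\<in>S. \<Sum>t\<in>S. (c s * cnj (c t)) * expectation (P s t))
      = (\<Sum>s\<in>S. complex_of_real ((cmod (c s))\<^sup>2 * expectation (\<lambda>\<omega>. (cmod (X s \<omega>))\<^sup>2)))"
  proof (rule sum.cong[OF refl])
    fix s assume s: "s \<in> S"
    have "(\<Sum>t\<in>S. (c s * cnj (c t)) * expectation (P s t))
        = (\<Sum>t\<in>S. if s = t then c s * cnj (c s) * expectation (\<lambda>\<omega>. (cmod (X s \<omega>))\<^sup>2) else 0)"
      using P[OF s] by (intro sum.cong) auto
    then show "(\<Sum>t\<in>S. (c s * cnj (c t)) * expectation (P s t))
        = complex_of_real ((cmod (c s))\<^sup>2 * expectation (\<lambda>\<omega>. (cmod (X s \<omega>))\<^sup>2))"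
      using S s by (simp add: complex_norm_square[symmetric])
  qed
  also have "Re \<dots> = (\<Sum>s\<in>S. (cmod (c s))\<^sup>2 * expectation (\<lambda>\<omega>. (cmod (X s \<omega>))\<^sup>2))"
    by simp
  finally show "expectation (\<lambda>\<omega>. (cmod (\<Sum>s\<in>S. c s * X s \<omega>))\<^sup>2)
      = (\<Sum>s\<in>S. (cmod (c s))\<^sup>2 * expectation (\<lambda>\<omega>. (cmod (X s \<omega>))\<^sup>2))" .
qed

lemma (in prob_space) complex_moments_from_parts:
  fixes X :: "'a \<Rightarrow> complex"
  assumes [measurable]: "X \<in> borel_measurable M"
    and Re2: "integrable M (\<lambda>\<omega>. (Re (X \<omega>))\<^sup>2)" and Im2: "integrable M (\<lambda>\<omega>. (Im (X \<omega>))\<^sup>2)"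
  shows "integrable M X"
    and "expectation X = Complex (expectation (\<lambda>\<omega>. Re (X \<omega>))) (expectation (\<lambda>\<omega>. Im (X \<omega>)))"
    and "integrable M (\<lambda>\<omega>. (cmod (X \<omega>))\<^sup>2)"
    and "expectation (\<lambda>\<omega>. (cmod (X \<omega>))\<^sup>2)
           = expectation (\<lambda>\<omega>. (Re (X \<omega>))\<^sup>2) + expectation (\<lambda>\<omega>. (Im (X \<omega>))\<^sup>2)"
proof -
  have "integrable M (\<lambda>\<omega>. Re (X \<omega>))" "integrable M (\<lambda>\<omega>. Im (X \<omega>))"
    by (rule square_integrable_imp_integrable[OF _ Re2] square_integrable_imp_integrable[OF _ Im2];
        measurable)+
  then have "integrable M (\<lambda>\<omega>. \<bar>Re (X \<omega>)\<bar> + \<bar>Im (X \<omega>)\<bar>)"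
    by auto
  then show X: "integrable M X"
    by (rule Bochner_Integration.integrable_bound) (auto intro: cmod_le)
  show "expectation X = Complex (expectation (\<lambda>\<omega>. Re (X \<omega>))) (expectation (\<lambda>\<omega>. Im (X \<omega>)))"
    using X by (simp add: complex_eq_iff)
  show "integrable M (\<lambda>\<omega>. (cmod (X \<omega>))\<^sup>2)"
    unfolding cmod_power2 using Re2 Im2 by (rule Bochner_Integration.integrable_add)
  show "expectation (\<lambda>\<omega>. (cmod (X \<omega>))\<^sup>2)
      = expectation (\<lambda>\<omega>. (Re (X \<omega>))\<^sup>2) + expectation (\<lambda>\<omega>. (Im (X \<omega>))\<^sup>2)"
    unfolding cmod_power2 using Re2 Im2 by (rule Bochner_Integration.integral_add)
qed

lemma (in prob_space) normal_distributed_second_moment: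
  assumes \<sigma>: "\<sigma> > 0" and X: "distributed M lborel X (normal_density 0 \<sigma>)"
  shows "integrable M (\<lambda>\<omega>. (X \<omega>)\<^sup>2)" and "expectation (\<lambda>\<omega>. (X \<omega>)\<^sup>2) = \<sigma>\<^sup>2"
proof -
  show "integrable M (\<lambda>\<omega>. (X \<omega>)\<^sup>2)"
    using distributed_integrable[OF X, of "\<lambda>x. x\<^sup>2"] integrable_normal_moment[where \<mu>=0 and \<sigma>=\<sigma> and k=2] \<sigma>
    by simp
  show "expectation (\<lambda>\<omega>. (X \<omega>)\<^sup>2) = \<sigma>\<^sup>2"
    using normal_distributed_variance[OF \<sigma> X] normal_distributed_expectation[OF \<sigma> X] by simp
qed

section \<open>Markov-type inequalities and limits in probability\<close>

lemma (in prob_space) prob_less_mean_add_ge: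
  assumes int: "integrable M Z" and nonneg: "\<And>\<omega>. 0 \<le> Z \<omega>" and \<delta>: "\<delta> > 0"
  shows "\<delta> / (expectation Z + \<delta>) \<le> prob {\<omega>\<in>space M. Z \<omega> < expectation Z + \<delta>}"
proof -
  have [measurable]: "Z \<in> borel_measurable M"
    using int by auto
  have m: "expectation Z \<ge> 0"
    using nonneg by simp
  then have pos: "expectation Z + \<delta> > 0"
    using \<delta> by linarith
  have "prob {\<omega>\<in>space M. expectation Z + \<delta> \<le> Z \<omega>} \<le> expectation Z / (expectation Z + \<delta>)"
    by (intro integral_Markov_inequality_measure[OF int, of "space M"]) (use pos nonneg in auto)
  moreover have "{\<omega>\<in>space M. Z \<omega> < expectation Z + \<delta>}
      = space M - {\<omega>\<in>space M. expectation Z + \<delta> \<le> Z \<omega>}"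
    by auto
  ultimately show ?thesis
    using m \<delta> by (simp add: prob_compl field_simps)
qed

lemma (in prob_space) prob_greater_ge_reverse_Markov:
  assumes int: "integrable M T" and bound: "\<And>\<omega>. \<omega> \<in> space M \<Longrightarrow> T \<omega> \<le> K" and a: "a < K"
  shows "(expectation T - a) / (K - a) \<le> prob {\<omega>\<in>space M. a < T \<omega>}"
proof -
  have [measurable]: "T \<in> borel_measurable M"
    using int by auto
  have "prob {\<omega>\<in>space M. K - a \<le> K - T \<omega>} \<le> expectation (\<lambda>\<omega>. K - T \<omega>) / (K - a)"
    using a bound by (intro integral_Markov_inequality_measure[of M "\<lambda>\<omega>. K - T \<omega>" "space M"])
      (auto simp: int)
  moreover have "expectation (\<lambda>\<omega>. K - T \<omega>) = K - expectation T"
    using int by (simp add: prob_space)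
  moreover have "{\<omega>\<in>space M. a < T \<omega>} = space M - {\<omega>\<in>space M. K - a \<le> K - T \<omega>}"
    by auto
  ultimately show ?thesis
    using a by (simp add: prob_compl field_simps)
qed

lemma (in prob_space) conv_in_prob_exists_prob_far_less:
  assumes "conv_in_prob M Y F" "e > 0" "q > 0"
  shows "\<exists>k\<ge>1. prob {\<omega>\<in>space M. e < \<bar>Y k \<omega> - F\<bar>} < q"
proof -
  have "(\<lambda>k. prob {\<omega>\<in>space M. e < \<bar>Y k \<omega> - F\<bar>}) \<longlonglongrightarrow> 0"
    using assms(1,2) by (simp add: conv_in_prob_def)
  then have "eventually (\<lambda>k. prob {\<omega>\<in>space M. e < \<bar>Y k \<omega> - F\<bar>} < q) sequentially"
    using assms(3) by (rule order_tendstoD(2))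
  then obtain N where "\<And>k. k \<ge> N \<Longrightarrow> prob {\<omega>\<in>space M. e < \<bar>Y k \<omega> - F\<bar>} < q"
    unfolding eventually_sequentially by blast
  then show ?thesis
    by (intro exI[of _ "max N 1"]) simp
qed

lemma (in prob_space) conv_in_prob_lower_bound:
  assumes conv: "conv_in_prob M Y F" and q: "q > 0"
    and prob: "\<And>k. k \<ge> 1 \<Longrightarrow> q \<le> prob {\<omega>\<in>space M. c < Y k \<omega>}"
  shows "c \<le> F"
proof (rule ccontr)
  assume "\<not> c \<le> F"
  then obtain k where k: "k \<ge> 1" and far: "prob {\<omega>\<in>space M. c - F < \<bar>Y k \<omega> - F\<bar>} < q"
    using conv_in_prob_exists_prob_far_less[OF conv _ q, of "c - F"] by auto
  have [measurable]: "Y k \<in> borel_measurable M"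
    using conv by (simp add: conv_in_prob_def)
  have "prob {\<omega>\<in>space M. c < Y k \<omega>} \<le> prob {\<omega>\<in>space M. c - F < \<bar>Y k \<omega> - F\<bar>}"
    by (intro finite_measure_mono) auto
  then show False
    using prob[OF k] far by simp
qed

lemma (in prob_space) conv_in_prob_upper_bound:
  assumes conv: "conv_in_prob M Y F" and q: "q > 0"
    and prob: "\<And>k. k \<ge> 1 \<Longrightarrow> q \<le> prob {\<omega>\<in>space M. Y k \<omega> < c}"
  shows "F \<le> c"
proof (rule ccontr)
  assume "\<not> F \<le> c"
  then obtain k where k: "k \<ge> 1" and far: "prob {\<omega>\<in>space M. F - c < \<bar>Y k \<omega> - F\<bar>} < q"
    using conv_in_prob_exists_prob_far_less[OF conv _ q, of "F - c"] by auto
  have [measurable]: "Y k \<in> borel_measurable M"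
    using conv by (simp add: conv_in_prob_def)
  have "prob {\<omega>\<in>space M. Y k \<omega> < c} \<le> prob {\<omega>\<in>space M. F - c < \<bar>Y k \<omega> - F\<bar>}"
    by (intro finite_measure_mono) auto
  then show False
    using prob[OF k] far by simp
qed

lemma (in prob_space) conv_in_prob_sandwich_lower:
  assumes conv: "conv_in_prob M Y F" and \<beta>: "\<beta> > 0"
    and int: "\<And>k. k \<ge> 1 \<Longrightarrow> integrable M (Z k)" and nonneg: "\<And>k \<omega>. 0 \<le> Z k \<omega>"
    and mean: "\<And>k. k \<ge> 1 \<Longrightarrow> expectation (Z k) = m"
    and lower: "\<And>k \<omega>. k \<ge> 1 \<Longrightarrow> \<omega> \<in> space M \<Longrightarrow> \<alpha> - \<beta> * Z k \<omega> \<le> Y k \<omega>"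
  shows "\<alpha> - \<beta> * m \<le> F"
proof (rule field_le_epsilon)
  fix e :: real assume "e > 0"
  define \<delta> where "\<delta> = e / \<beta>"
  have \<delta>: "\<delta> > 0"
    unfolding \<delta>_def using \<open>e > 0\<close> \<beta> by simp
  have "m \<ge> 0"
    using mean[of 1] nonneg by (metis integral_nonneg_AE AE_I2 order_refl)
  have "\<alpha> - \<beta> * (m + \<delta>) \<le> F"
  proof (rule conv_in_prob_lower_bound[OF conv])
    show "0 < \<delta> / (m + \<delta>)"
      using \<open>m \<ge> 0\<close> \<delta> by simp
    fix k :: nat assume k: "k \<ge> 1"
    have [measurable]: "Y k \<in> borel_measurable M"
      using conv by (simp add: conv_in_prob_def)
    have [measurable]: "Z k \<in> borel_measurable M"
      using int[OF k] by auto
    have "\<delta> / (m + \<delta>) \<le> prob {\<omega>\<in>space M. Z k \<omega> < m + \<delta>}"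
      using prob_less_mean_add_ge[OF int[OF k] nonneg \<delta>] by (simp add: mean[OF k])
    also have "\<dots> \<le> prob {\<omega>\<in>space M. \<alpha> - \<beta> * (m + \<delta>) < Y k \<omega>}"
    proof (intro finite_measure_mono subsetI)
      fix \<omega> assume "\<omega> \<in> {\<omega>\<in>space M. Z k \<omega> < m + \<delta>}"
      then have "\<omega> \<in> space M" "\<beta> * Z k \<omega> < \<beta> * (m + \<delta>)"
        using \<beta> by auto
      then show "\<omega> \<in> {\<omega>\<in>space M. \<alpha> - \<beta> * (m + \<delta>) < Y k \<omega>}"
        using lower[OF k] by fastforce
    qed measurable
    finally show "\<delta> / (m + \<delta>) \<le> prob {\<omega>\<in>space M. \<alpha> - \<beta> * (m + \<delta>) < Y k \<omega>}" .
  qed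
  then show "\<alpha> - \<beta> * m \<le> F + e"
    using \<beta> by (simp add: \<delta>_def algebra_simps)
qed

lemma (in prob_space) conv_in_prob_sandwich_upper:
  assumes conv: "conv_in_prob M Y F" and \<beta>: "\<beta> > 0"
    and prob: "\<And>\<delta>. \<delta> > 0 \<Longrightarrow> \<exists>q>0. \<forall>k\<ge>1. q \<le> prob {\<omega>\<in>space M. m - \<delta> < Z k \<omega>}"
    and upper: "\<And>k \<omega>. k \<ge> 1 \<Longrightarrow> \<omega> \<in> space M \<Longrightarrow> Y k \<omega> \<le> \<alpha> - \<beta> * Z k \<omega>"
    and [measurable]: "\<And>k. Z k \<in> borel_measurable M"
  shows "F \<le> \<alpha> - \<beta> * m"
proof (rule field_le_epsilon)
  fix e :: real assume "e > 0"
  define \<delta> where "\<delta> = e / \<beta>"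
  obtain q where q: "q > 0" and q_le: "\<And>k. k \<ge> 1 \<Longrightarrow> q \<le> prob {\<omega>\<in>space M. m - \<delta> < Z k \<omega>}"
    using prob[of \<delta>] \<open>e > 0\<close> \<beta> by (auto simp: \<delta>_def)
  have "F \<le> \<alpha> - \<beta> * (m - \<delta>)"
  proof (rule conv_in_prob_upper_bound[OF conv q])
    fix k :: nat assume k: "k \<ge> 1"
    have [measurable]: "Y k \<in> borel_measurable M"
      using conv by (simp add: conv_in_prob_def)
    have "prob {\<omega>\<in>space M. m - \<delta> < Z k \<omega>} \<le> prob {\<omega>\<in>space M. Y k \<omega> < \<alpha> - \<beta> * (m - \<delta>)}"
    proof (intro finite_measure_mono subsetI)
      fix \<omega> assume "\<omega> \<in> {\<omega>\<in>space M. m - \<delta> < Z k \<omega>}"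
      then have "\<omega> \<in> space M" "\<beta> * (m - \<delta>) < \<beta> * Z k \<omega>"
        using \<beta> by auto
      then show "\<omega> \<in> {\<omega>\<in>space M. Y k \<omega> < \<alpha> - \<beta> * (m - \<delta>)}"
        using upper[OF k] by fastforce
    qed measurable
    then show "q \<le> prob {\<omega>\<in>space M. Y k \<omega> < \<alpha> - \<beta> * (m - \<delta>)}"
      using q_le[OF k] by linarith
  qed
  then show "F \<le> \<alpha> - \<beta> * m + e"
    using \<beta> by (simp add: \<delta>_def algebra_simps)
qed

section \<open>Uniform integrability\<close>

text \<open>Uniform integrability in the form sup_i E (X_i - K)^+ \<rightarrow> 0 as K \<rightarrow> \<infinity>; for nonnegative
  families this is equivalent to the textbook form sup_i E (X_i; X_i > K) \<rightarrow> 0.\<close>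
definition (in prob_space) uniformly_integrable :: "('i \<Rightarrow> 'a \<Rightarrow> real) \<Rightarrow> bool" where
  "uniformly_integrable X \<longleftrightarrow> (\<forall>i. integrable M (X i)) \<and>
     (\<forall>\<eta>>0. \<exists>K\<ge>0. \<forall>i. expectation (\<lambda>\<omega>. max (X i \<omega> - K) 0) \<le> \<eta>)"

lemma integral_excess_tendsto_0:
  fixes U :: "'a \<Rightarrow> real"
  assumes "integrable \<mu> U"
  shows "((\<lambda>K. \<integral>\<omega>. max (U \<omega> - K) 0 \<partial>\<mu>) \<longlongrightarrow> 0) at_top"
proof -
  have [measurable]: "U \<in> borel_measurable \<mu>"
    using assms by auto
  have "((\<lambda>K. \<integral>\<omega>. max (U \<omega> - K) 0 \<partial>\<mu>) \<longlongrightarrow> \<integral>\<omega>. 0 \<partial>\<mu>) at_top"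
  proof (rule integral_dominated_convergence_at_top[where w = "\<lambda>\<omega>. \<bar>U \<omega>\<bar>"])
    show "AE \<omega> in \<mu>. ((\<lambda>K. max (U \<omega> - K) 0) \<longlongrightarrow> 0) at_top"
    proof (rule AE_I2)
      fix \<omega>
      have "eventually (\<lambda>K. max (U \<omega> - K) 0 = 0) at_top"
        using eventually_ge_at_top[of "U \<omega>"] by eventually_elim simp
      then show "((\<lambda>K. max (U \<omega> - K) 0) \<longlongrightarrow> 0) at_top"
        by (rule tendsto_eventually)
    qed
    show "\<forall>\<^sub>F K in at_top. AE \<omega> in \<mu>. norm (max (U \<omega> - K) 0) \<le> \<bar>U \<omega>\<bar>"
      using eventually_ge_at_top[of "0::real"] by eventually_elim auto
  qed (use assms in auto)
  then show ?thesis
    by simp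
qed

lemma (in prob_space) uniformly_integrable_identically_distributed:
  fixes Y :: "'i \<Rightarrow> 'a \<Rightarrow> 'b" and g :: "'b \<Rightarrow> real"
  assumes Y: "\<And>i. Y i \<in> measurable M N" and distr: "\<And>i. distr M N (Y i) = \<mu>"
    and g: "g \<in> borel_measurable N" and int: "integrable \<mu> g"
  shows "uniformly_integrable (\<lambda>i \<omega>. g (Y i \<omega>))"
  unfolding uniformly_integrable_def
proof (intro conjI allI impI)
  show "integrable M (\<lambda>\<omega>. g (Y i \<omega>))" for i
    using int integrable_distr_eq[OF Y g] by (simp add: distr)
  have excess: "expectation (\<lambda>\<omega>. max (g (Y i \<omega>) - K) 0) = (\<integral>y. max (g y - K) 0 \<partial>\<mu>)" for i K
    using integral_distr[OF Y[of i], of "\<lambda>y. max (g y - K) 0"] g by (simp add: distr)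
  fix \<eta> :: real assume "\<eta> > 0"
  then have "eventually (\<lambda>K. (\<integral>y. max (g y - K) 0 \<partial>\<mu>) < \<eta>) at_top"
    by (rule order_tendstoD(2)[OF integral_excess_tendsto_0[OF int]])
  then obtain K0 where "\<And>K. K \<ge> K0 \<Longrightarrow> (\<integral>y. max (g y - K) 0 \<partial>\<mu>) < \<eta>"
    unfolding eventually_at_top_linorder by blast
  then show "\<exists>K\<ge>0. \<forall>i. expectation (\<lambda>\<omega>. max (g (Y i \<omega>) - K) 0) \<le> \<eta>"
    by (intro exI[of _ "max K0 0"]) (auto simp: excess less_imp_le)
qed

lemma (in prob_space) uniformly_integrable_add:
  assumes X: "uniformly_integrable X" and Y: "uniformly_integrable Y"
  shows "uniformly_integrable (\<lambda>i \<omega>. X i \<omega> + Y i \<omega>)"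
  unfolding uniformly_integrable_def
proof (intro conjI allI impI)
  show "integrable M (\<lambda>\<omega>. X i \<omega> + Y i \<omega>)" for i
    using X Y by (auto simp: uniformly_integrable_def)
  fix \<eta> :: real assume "\<eta> > 0"
  then obtain K1 K2 where K: "K1 \<ge> 0" "K2 \<ge> 0"
    and tail1: "\<And>i. expectation (\<lambda>\<omega>. max (X i \<omega> - K1) 0) \<le> \<eta> / 2"
    and tail2: "\<And>i. expectation (\<lambda>\<omega>. max (Y i \<omega> - K2) 0) \<le> \<eta> / 2"
    using X Y unfolding uniformly_integrable_def by (meson half_gt_zero)
  have "expectation (\<lambda>\<omega>. max (X i \<omega> + Y i \<omega> - (K1 + K2)) 0)
      \<le> expectation (\<lambda>\<omega>. max (X i \<omega> - K1) 0 + max (Y i \<omega> - K2) 0)" for i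
    using X Y by (intro integral_mono) (auto simp: uniformly_integrable_def)
  also have "\<dots> i \<le> \<eta>" for i
    using X Y tail1[of i] tail2[of i]
    by (subst Bochner_Integration.integral_add) (auto simp: uniformly_integrable_def)
  finally show "\<exists>K\<ge>0. \<forall>i. expectation (\<lambda>\<omega>. max (X i \<omega> + Y i \<omega> - K) 0) \<le> \<eta>"
    using K by (intro exI[of _ "K1 + K2"]) auto
qed

lemma (in prob_space) uniformly_integrable_sum:
  assumes "finite S" "\<And>s. s \<in> S \<Longrightarrow> uniformly_integrable (X s)"
  shows "uniformly_integrable (\<lambda>i \<omega>. \<Sum>s\<in>S. X s i \<omega>)"
  using assms
proof (induction S rule: finite_induct)
  case empty
  show ?case
    by (auto simp: uniformly_integrable_def)
next
  case (insert s S)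
  then show ?case
    by (simp add: uniformly_integrable_add)
qed

lemma (in prob_space) uniformly_integrable_mono:
  assumes X: "uniformly_integrable X" and int: "\<And>i. integrable M (Y i)"
    and le: "\<And>i \<omega>. \<omega> \<in> space M \<Longrightarrow> Y i \<omega> \<le> X i \<omega>"
  shows "uniformly_integrable Y"
  unfolding uniformly_integrable_def
proof (intro conjI allI impI)
  show "integrable M (Y i)" for i
    by (rule int)
  fix \<eta> :: real assume "\<eta> > 0"
  then obtain K where "K \<ge> 0" and tail: "\<And>i. expectation (\<lambda>\<omega>. max (X i \<omega> - K) 0) \<le> \<eta>"
    using X unfolding uniformly_integrable_def by blast
  have "max (Y i \<omega> - K) 0 \<le> max (X i \<omega> - K) 0" if "\<omega> \<in> space M" for i \<omega>
    using le[OF that, of i] by (simp add: max_def)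
  then have "expectation (\<lambda>\<omega>. max (Y i \<omega> - K) 0) \<le> expectation (\<lambda>\<omega>. max (X i \<omega> - K) 0)" for i
    using X int by (intro integral_mono) (auto simp: uniformly_integrable_def)
  then show "\<exists>K\<ge>0. \<forall>i. expectation (\<lambda>\<omega>. max (Y i \<omega> - K) 0) \<le> \<eta>"
    using \<open>K \<ge> 0\<close> tail by (meson order.trans)
qed

lemma (in prob_space) uniformly_integrable_truncation:
  assumes W: "uniformly_integrable W" and \<eta>: "\<eta> > 0"
  obtains K where "K \<ge> 0" and "\<And>i. expectation (W i) - \<eta> \<le> expectation (\<lambda>\<omega>. min (W i \<omega>) K)"
proof -
  obtain K where "K \<ge> 0" and tail: "\<And>i. expectation (\<lambda>\<omega>. max (W i \<omega> - K) 0) \<le> \<eta>"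
    using W \<eta> unfolding uniformly_integrable_def by blast
  have "min (W i \<omega>) K = W i \<omega> - max (W i \<omega> - K) 0" for i \<omega>
    by (simp add: min_def max_def)
  then have truncated_mean: "expectation (\<lambda>\<omega>. min (W i \<omega>) K)
      = expectation (W i) - expectation (\<lambda>\<omega>. max (W i \<omega> - K) 0)" for i
    using W by (simp add: uniformly_integrable_def)
  show ?thesis
  proof (rule that[OF \<open>K \<ge> 0\<close>])
    show "expectation (W i) - \<eta> \<le> expectation (\<lambda>\<omega>. min (W i \<omega>) K)" for i
      using truncated_mean[of i] tail[of i] by linarith
  qed
qed

text \<open>The average of the truncations min (W i) K is bounded by K and has mean at least
  m - \<delta>/2, so the reverse Markov inequality bounds its probability of exceeding m - \<delta>
  from below, uniformly in k.\<close>
lemma (in prob_space) uniformly_integrable_average_prob_ge: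
  assumes W: "uniformly_integrable W" and mean: "\<And>i. expectation (W i) = m" and \<delta>: "\<delta> > 0"
  shows "\<exists>q>0. \<forall>k\<ge>1. q \<le> prob {\<omega>\<in>space M. m - \<delta> < (\<Sum>i<k. W i \<omega>) / real k}"
proof -
  have int: "integrable M (W i)" for i
    using W by (simp add: uniformly_integrable_def)
  then have [measurable]: "W i \<in> borel_measurable M" for i
    by auto
  obtain K where "K \<ge> 0" and trunc: "\<And>i. m - \<delta> / 2 \<le> expectation (\<lambda>\<omega>. min (W i \<omega>) K)"
    using uniformly_integrable_truncation[OF W, of "\<delta> / 2"] \<delta> by (auto simp: mean)
  have K: "m - \<delta> < K"
    using trunc[of 0] integral_mono[of M "\<lambda>\<omega>. min (W 0 \<omega>) K" "\<lambda>_. K"] int \<delta>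
    by (simp add: prob_space)
  define q where "q = (\<delta> / 2) / (K - (m - \<delta>))"
  have "q \<le> prob {\<omega>\<in>space M. m - \<delta> < (\<Sum>i<k. W i \<omega>) / real k}" if k: "k \<ge> 1" for k
  proof -
    define T where "T = (\<lambda>\<omega>. (\<Sum>i<k. min (W i \<omega>) K) / real k)"
    have T_le: "T \<omega> \<le> K" for \<omega>
      using k sum_mono[of "{..<k}" "\<lambda>i. min (W i \<omega>) K" "\<lambda>_. K"] by (simp add: T_def divide_le_eq mult.commute)
    have int_T: "integrable M T"
      unfolding T_def using int by auto
    have "expectation T = (\<Sum>i<k. expectation (\<lambda>\<omega>. min (W i \<omega>) K)) / real k"
      unfolding T_def using int by (simp add: Bochner_Integration.integral_sum)
    then have "m - \<delta> / 2 \<le> expectation T"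
      using k trunc sum_mono[of "{..<k}" "\<lambda>_. m - \<delta> / 2" "\<lambda>i. expectation (\<lambda>\<omega>. min (W i \<omega>) K)"]
      by (simp add: le_divide_eq mult.commute)
    then have "q \<le> (expectation T - (m - \<delta>)) / (K - (m - \<delta>))"
      unfolding q_def using K by (intro divide_right_mono) auto
    also have "\<dots> \<le> prob {\<omega>\<in>space M. m - \<delta> < T \<omega>}"
      using K by (intro prob_greater_ge_reverse_Markov[OF int_T T_le])
    also have "\<dots> \<le> prob {\<omega>\<in>space M. m - \<delta> < (\<Sum>i<k. W i \<omega>) / real k}"
    proof (rule finite_measure_mono)
      have "T \<omega> \<le> (\<Sum>i<k. W i \<omega>) / real k" for \<omega>
        unfolding T_def by (intro divide_right_mono sum_mono) auto
      then show "{\<omega>\<in>space M. m - \<delta> < T \<omega>} \<subseteq> {\<omega>\<in>space M. m - \<delta> < (\<Sum>i<k. W i \<omega>) / real k}"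
        by (auto intro: order.strict_trans2)
    qed measurable
    finally show ?thesis .
  qed
  moreover have "q > 0"
    unfolding q_def using K \<delta> by simp
  ultimately show ?thesis
    by blast
qed

section \<open>The noisy linear model\<close>

lemma norm_rowmul_add_square_le:
  fixes A :: "nat \<Rightarrow> 'n::finite \<Rightarrow> complex"
  shows "(cmod (rowmul A i d + z))\<^sup>2
           \<le> 2 * ((norm d)\<^sup>2 + 1) * ((\<Sum>j\<in>UNIV. (cmod (A i j))\<^sup>2) + (cmod z)\<^sup>2)"
proof -
  define S where "S = rowmul A i d"
  define a2 where "a2 = (\<Sum>j\<in>UNIV. (cmod (A i j))\<^sup>2)"
  have "cmod S \<le> (\<Sum>j\<in>UNIV. cmod (A i j) * cmod (d $ j))"
    unfolding S_def rowmul_def by (rule order.trans[OF norm_sum]) (simp add: norm_mult)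
  then have "(cmod S)\<^sup>2 \<le> (\<Sum>j\<in>UNIV. cmod (A i j) * cmod (d $ j))\<^sup>2"
    by (intro power_mono) auto
  also have "\<dots> \<le> a2 * (norm d)\<^sup>2"
    unfolding a2_def norm_vec_def L2_set_def by (simp add: sum_nonneg Cauchy_Schwarz_ineq_sum)
  finally have S: "(cmod S)\<^sup>2 \<le> a2 * (norm d)\<^sup>2" .
  have "(cmod (S + z))\<^sup>2 \<le> (cmod S + cmod z)\<^sup>2"
    by (intro power_mono norm_triangle_ineq) auto
  also have "\<dots> \<le> 2 * (cmod S)\<^sup>2 + 2 * (cmod z)\<^sup>2"
    using zero_le_power2[of "cmod S - cmod z"] by (simp add: power2_eq_square algebra_simps)
  also have "\<dots> \<le> 2 * ((norm d)\<^sup>2 + 1) * (a2 + (cmod z)\<^sup>2)"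
  proof -
    have "0 \<le> a2" "0 \<le> (norm d)\<^sup>2 * (cmod z)\<^sup>2"
      by (simp_all add: a2_def sum_nonneg)
    moreover have "2 * ((norm d)\<^sup>2 + 1) * (a2 + (cmod z)\<^sup>2)
        = 2 * (a2 * (norm d)\<^sup>2) + 2 * (cmod z)\<^sup>2 + 2 * a2 + 2 * ((norm d)\<^sup>2 * (cmod z)\<^sup>2)"
      by (simp add: algebra_simps)
    ultimately show ?thesis
      using S by linarith
  qed
  finally show ?thesis
    unfolding S_def a2_def .
qed

locale noisy_linear_model = prob_space M
  for M :: "'a measure" and A :: "nat \<Rightarrow> 'n::finite \<Rightarrow> 'a \<Rightarrow> complex" and v :: "nat \<Rightarrow> 'a \<Rightarrow> complex" +
  assumes indep: "indep_vars (\<lambda>_. borel) (case_sum (\<lambda>(i, j). A i j) v) UNIV"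
    and ident: "\<And>i j i' j'. distr M borel (A i j) = distr M borel (A i' j')"
    and intRe: "\<And>i j. integrable M (\<lambda>\<omega>. (Re (A i j \<omega>))\<^sup>2)"
    and intIm: "\<And>i j. integrable M (\<lambda>\<omega>. (Im (A i j \<omega>))\<^sup>2)"
    and meanRe: "\<And>i j. expectation (\<lambda>\<omega>. Re (A i j \<omega>)) = 0"
    and meanIm: "\<And>i j. expectation (\<lambda>\<omega>. Im (A i j \<omega>)) = 0"
    and varRe: "\<And>i j. expectation (\<lambda>\<omega>. (Re (A i j \<omega>))\<^sup>2) = 1"
    and varIm: "\<And>i j. expectation (\<lambda>\<omega>. (Im (A i j \<omega>))\<^sup>2) = 1"
    and noiseRe: "\<And>i. distributed M lborel (\<lambda>\<omega>. Re (v i \<omega>)) (normal_density 0 (sqrt (1/2)))"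
    and noiseIm: "\<And>i. distributed M lborel (\<lambda>\<omega>. Im (v i \<omega>)) (normal_density 0 (sqrt (1/2)))"
begin

text \<open>With d = h - hh, residual d i is y_i - (A hh)_i.\<close>
definition residual :: "complex ^ 'n \<Rightarrow> nat \<Rightarrow> 'a \<Rightarrow> complex" where
  "residual d i \<omega> = rowmul (\<lambda>i j. A i j \<omega>) i d + v i \<omega>"

lemma entry_measurable [measurable]: "A i j \<in> borel_measurable M"
  using indep unfolding indep_vars_def by (metis UNIV_I case_prod_conv sum.case(1))

lemma noise_measurable [measurable]: "v i \<in> borel_measurable M"
  using indep unfolding indep_vars_def by (metis UNIV_I sum.case(2))

lemma entry_moments:
  shows "integrable M (A i j)" and "expectation (A i j) = 0"
    and "integrable M (\<lambda>\<omega>. (cmod (A i j \<omega>))\<^sup>2)" and "expectation (\<lambda>\<omega>. (cmod (A i j \<omega>))\<^sup>2) = 2"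
  using complex_moments_from_parts[OF entry_measurable intRe intIm]
  by (simp_all add: meanRe meanIm varRe varIm complex_eq_iff)

lemma noise_moments:
  shows "integrable M (\<lambda>\<omega>. (Re (v i \<omega>))\<^sup>2)" and "integrable M (\<lambda>\<omega>. (Im (v i \<omega>))\<^sup>2)"
    and "integrable M (v i)" and "expectation (v i) = 0"
    and "integrable M (\<lambda>\<omega>. (cmod (v i \<omega>))\<^sup>2)" and "expectation (\<lambda>\<omega>. (cmod (v i \<omega>))\<^sup>2) = 1"
proof -
  have \<sigma>: "sqrt (1/2) > (0::real)"
    by simp
  note Re2 = normal_distributed_second_moment[OF \<sigma> noiseRe[of i]]
  note Im2 = normal_distributed_second_moment[OF \<sigma> noiseIm[of i]]
  show "integrable M (\<lambda>\<omega>. (Re (v i \<omega>))\<^sup>2)" "integrable M (\<lambda>\<omega>. (Im (v i \<omega>))\<^sup>2)"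
    using Re2 Im2 by simp_all
  show "integrable M (v i)" "expectation (v i) = 0"
    "integrable M (\<lambda>\<omega>. (cmod (v i \<omega>))\<^sup>2)" "expectation (\<lambda>\<omega>. (cmod (v i \<omega>))\<^sup>2) = 1"
    using complex_moments_from_parts[OF noise_measurable Re2(1) Im2(1)] Re2 Im2
      normal_distributed_expectation[OF \<sigma> noiseRe[of i]]
      normal_distributed_expectation[OF \<sigma> noiseIm[of i]]
    by (simp_all add: complex_eq_iff)
qed

lemma residual_second_moment:
  shows "integrable M (\<lambda>\<omega>. (cmod (residual d i \<omega>))\<^sup>2)"
    and "expectation (\<lambda>\<omega>. (cmod (residual d i \<omega>))\<^sup>2) = 2 * (norm d)\<^sup>2 + 1"
proof -
  define X where "X = case_sum (\<lambda>(i, j). A i j) v"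
  define \<phi> :: "'n option \<Rightarrow> (nat \<times> 'n) + nat" where "\<phi> = case_option (Inr i) (\<lambda>j. Inl (i, j))"
  define c where "c = case_option 1 (\<lambda>j. d $ j)"
  have sum: "residual d i \<omega> = (\<Sum>s\<in>UNIV. c s * X (\<phi> s) \<omega>)" for \<omega>
    by (simp add: residual_def rowmul_def UNIV_option_conv sum.reindex X_def \<phi>_def c_def ac_simps)
  have indep_terms: "indep_var borel (X (\<phi> s)) borel (X (\<phi> t))" if "s \<noteq> t" for s t
  proof -
    have "\<phi> s \<noteq> \<phi> t"
      using that by (cases s; cases t) (auto simp: \<phi>_def)
    then show ?thesis
      using indep_vars_imp_indep_var[OF indep[folded X_def]] by simp
  qed
  have moments: "integrable M (X (\<phi> s))" "expectation (X (\<phi> s)) = 0"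
    "integrable M (\<lambda>\<omega>. (cmod (X (\<phi> s) \<omega>))\<^sup>2)"
    "expectation (\<lambda>\<omega>. (cmod (X (\<phi> s) \<omega>))\<^sup>2) = (case s of None \<Rightarrow> 1 | Some j \<Rightarrow> 2)" for s
    by (cases s; simp add: X_def \<phi>_def entry_moments noise_moments)+
  note pythagoras = expectation_norm_sum_square_indep[of UNIV "\<lambda>s. X (\<phi> s)",
      OF finite indep_terms moments(1-3)]
  show "integrable M (\<lambda>\<omega>. (cmod (residual d i \<omega>))\<^sup>2)"
    unfolding sum by (rule pythagoras(1))
  have norm_d: "(norm d)\<^sup>2 = (\<Sum>j\<in>UNIV. (cmod (d $ j))\<^sup>2)"
    unfolding norm_vec_def L2_set_def by (simp add: sum_nonneg)
  have "expectation (\<lambda>\<omega>. (cmod (residual d i \<omega>))\<^sup>2)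
      = expectation (\<lambda>\<omega>. (cmod (\<Sum>s\<in>UNIV. c s * X (\<phi> s) \<omega>))\<^sup>2)"
    by (simp only: sum)
  also have "\<dots> = (\<Sum>s\<in>UNIV. (cmod (c s))\<^sup>2 * expectation (\<lambda>\<omega>. (cmod (X (\<phi> s) \<omega>))\<^sup>2))"
    by (rule pythagoras(2))
  also have "\<dots> = 2 * (norm d)\<^sup>2 + 1"
    by (simp add: norm_d moments(4) UNIV_option_conv sum.reindex c_def sum_distrib_left mult.commute)
  finally show "expectation (\<lambda>\<omega>. (cmod (residual d i \<omega>))\<^sup>2) = 2 * (norm d)\<^sup>2 + 1" .
qed

lemma residual_uniformly_integrable: "uniformly_integrable (\<lambda>i \<omega>. (cmod (residual d i \<omega>))\<^sup>2)"
proof -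
  define C where "C = 2 * ((norm d)\<^sup>2 + 1)"
  have entries: "uniformly_integrable (\<lambda>i \<omega>. C * (cmod (A i j \<omega>))\<^sup>2)" for j
  proof (rule uniformly_integrable_identically_distributed
      [where Y = "\<lambda>i. A i j" and N = borel and \<mu> = "distr M borel (A 0 j)" and g = "\<lambda>z. C * (cmod z)\<^sup>2"])
    show "integrable (distr M borel (A 0 j)) (\<lambda>z. C * (cmod z)\<^sup>2)"
      using entry_moments(3) by (simp add: integrable_distr_eq)
  qed (auto intro: ident)
  have noise_Re: "uniformly_integrable (\<lambda>i \<omega>. C * (Re (v i \<omega>))\<^sup>2)"
  proof (rule uniformly_integrable_identically_distributed
      [where Y = "\<lambda>i \<omega>. Re (v i \<omega>)" and N = lborel and \<mu> = "distr M lborel (\<lambda>\<omega>. Re (v 0 \<omega>))"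
        and g = "\<lambda>x. C * x\<^sup>2"])
    show "integrable (distr M lborel (\<lambda>\<omega>. Re (v 0 \<omega>))) (\<lambda>x. C * x\<^sup>2)"
      using noise_moments(1) by (simp add: integrable_distr_eq)
  qed (auto simp: distributed_distr_eq_density[OF noiseRe])
  have noise_Im: "uniformly_integrable (\<lambda>i \<omega>. C * (Im (v i \<omega>))\<^sup>2)"
  proof (rule uniformly_integrable_identically_distributed
      [where Y = "\<lambda>i \<omega>. Im (v i \<omega>)" and N = lborel and \<mu> = "distr M lborel (\<lambda>\<omega>. Im (v 0 \<omega>))"
        and g = "\<lambda>x. C * x\<^sup>2"])
    show "integrable (distr M lborel (\<lambda>\<omega>. Im (v 0 \<omega>))) (\<lambda>x. C * x\<^sup>2)"
      using noise_moments(2) by (simp add: integrable_distr_eq)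
  qed (auto simp: distributed_distr_eq_density[OF noiseIm])
  have dominating: "uniformly_integrable (\<lambda>i \<omega>. (\<Sum>j\<in>UNIV. C * (cmod (A i j \<omega>))\<^sup>2)
      + C * (Re (v i \<omega>))\<^sup>2 + C * (Im (v i \<omega>))\<^sup>2)"
    by (intro uniformly_integrable_add uniformly_integrable_sum entries noise_Re noise_Im) auto
  have bound: "(cmod (residual d i \<omega>))\<^sup>2
      \<le> (\<Sum>j\<in>UNIV. C * (cmod (A i j \<omega>))\<^sup>2) + C * (Re (v i \<omega>))\<^sup>2 + C * (Im (v i \<omega>))\<^sup>2" for i \<omega>
    using norm_rowmul_add_square_le[of "\<lambda>i j. A i j \<omega>" i d "v i \<omega>"]
    by (simp add: residual_def C_def cmod_power2 sum_distrib_left algebra_simps)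
  show ?thesis
    by (rule uniformly_integrable_mono[OF dominating residual_second_moment(1) bound])
qed

lemma conv_in_prob_limit_bounds:
  assumes D: "0 < D" "D < 1"
    and conv: "conv_in_prob M (\<lambda>k \<omega>. ell D c (\<lambda>i j. A i j \<omega>) (\<lambda>i. v i \<omega>) h hh {..<k} / (2 * real k)) F"
  defines "m \<equiv> 2 * (norm (h - hh))\<^sup>2 + 1"
  shows "ln D - ln pi / 2 - D - D\<^sup>2 - (1 + D) / 2 * m \<le> F"
    and "F \<le> ln D - ln pi / 2 + D + D\<^sup>2 - (1 - D) / 2 * m"
proof -
  define W where "W i \<omega> = (cmod (residual (h - hh) i \<omega>))\<^sup>2" for i \<omega>
  define Z where "Z k = (\<lambda>\<omega>. (\<Sum>i<k. W i \<omega>) / real k)" for k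
  have int: "integrable M (W i)" and mean: "expectation (W i) = m" for i
    unfolding W_def m_def by (rule residual_second_moment)+
  then have [measurable]: "Z k \<in> borel_measurable M" for k
    unfolding Z_def by auto
  define Y where "Y k \<omega> = ell D c (\<lambda>i j. A i j \<omega>) (\<lambda>i. v i \<omega>) h hh {..<k} / (2 * real k)" for k \<omega>
  have lower: "ln D - ln pi / 2 - D - D\<^sup>2 - (1 + D) / 2 * Z k \<omega> \<le> Y k \<omega>"
    and upper: "Y k \<omega> \<le> ln D - ln pi / 2 + D + D\<^sup>2 - (1 - D) / 2 * Z k \<omega>" if "k \<ge> 1" for k \<omega>
    using ell_average_bounds[OF D(1) that, where c = c and A = "\<lambda>i j. A i j \<omega>" and v = "\<lambda>i. v i \<omega>"
        and h = h and hh = hh]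
    by (simp_all add: Y_def Z_def W_def residual_def)
  show "ln D - ln pi / 2 - D - D\<^sup>2 - (1 + D) / 2 * m \<le> F"
  proof (rule conv_in_prob_sandwich_lower[OF conv[folded Y_def] _ _ _ _ lower])
    show "integrable M (Z k)" "expectation (Z k) = m" if "k \<ge> 1" for k
      using int mean that by (simp_all add: Z_def)
  qed (use D in \<open>auto simp: Z_def W_def intro!: divide_nonneg_nonneg sum_nonneg\<close>)
  show "F \<le> ln D - ln pi / 2 + D + D\<^sup>2 - (1 - D) / 2 * m"
  proof (rule conv_in_prob_sandwich_upper[OF conv[folded Y_def] _ _ upper])
    show "\<exists>q>0. \<forall>k\<ge>1. q \<le> prob {\<omega>\<in>space M. m - \<delta> < Z k \<omega>}" if "\<delta> > 0" for \<delta>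
      unfolding Z_def W_def
      by (rule uniformly_integrable_average_prob_ge[OF residual_uniformly_integrable mean[unfolded W_def] that])
  qed (use D in auto)
qed

lemma conv_in_prob_limit_approx:
  assumes D: "0 < D" "D < 1"
    and conv: "conv_in_prob M (\<lambda>k \<omega>. ell D c (\<lambda>i j. A i j \<omega>) (\<lambda>i. v i \<omega>) h hh {..<k} / (2 * real k)) F"
  defines "m \<equiv> 2 * (norm (h - hh))\<^sup>2 + 1"
  shows "\<bar>F - (ln D - ln pi / 2 - m / 2)\<bar> \<le> (2 + m / 2) * D"
proof -
  define L where "L = ln D - ln pi / 2"
  have "L - D - D\<^sup>2 - (1 + D) / 2 * m \<le> F" "F \<le> L + D + D\<^sup>2 - (1 - D) / 2 * m"
    using conv_in_prob_limit_bounds[OF D conv] by (simp_all only: L_def m_def)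
  moreover have "D\<^sup>2 \<le> D" "0 \<le> D * m"
    using D by (auto simp: power2_eq_square m_def)
  moreover have "(1 + D) / 2 * m = m / 2 + D * m / 2" "(1 - D) / 2 * m = m / 2 - D * m / 2"
    by (simp_all add: field_simps)
  ultimately have "\<bar>F - (L - m / 2)\<bar> \<le> 2 * D + D * m / 2"
    by (intro abs_leI) linarith+
  moreover have "(2 + m / 2) * D = 2 * D + D * m / 2"
    by (simp add: field_simps)
  ultimately show ?thesis
    by (simp only: L_def)
qed

end

theorem corollary1:
  fixes M :: "'a measure"
    and A :: "nat \<Rightarrow> 'n::finite \<Rightarrow> 'a \<Rightarrow> complex"
    and v :: "nat \<Rightarrow> 'a \<Rightarrow> complex"
    and h hh :: "complex ^ 'n"
    and off :: "real \<Rightarrow> real"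
    and f :: "real \<Rightarrow> real"
  assumes "prob_space M"
    and indep: "prob_space.indep_vars M (\<lambda>_. borel)
                  (case_sum (\<lambda>(i, j). A i j) v) UNIV"
    and ident: "\<And>i j i' j'. distr M borel (A i j) = distr M borel (A i' j')"
    and intRe: "\<And>i j. integrable M (\<lambda>\<omega>. (Re (A i j \<omega>))\<^sup>2)"
    and intIm: "\<And>i j. integrable M (\<lambda>\<omega>. (Im (A i j \<omega>))\<^sup>2)"
    and meanRe: "\<And>i j. prob_space.expectation M (\<lambda>\<omega>. Re (A i j \<omega>)) = 0"
    and meanIm: "\<And>i j. prob_space.expectation M (\<lambda>\<omega>. Im (A i j \<omega>)) = 0"
    and varRe: "\<And>i j. prob_space.expectation M (\<lambda>\<omega>. (Re (A i j \<omega>))\<^sup>2) = 1"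
    and varIm: "\<And>i j. prob_space.expectation M (\<lambda>\<omega>. (Im (A i j \<omega>))\<^sup>2) = 1"
    and noiseRe: "\<And>i. distributed M lborel (\<lambda>\<omega>. Re (v i \<omega>)) (normal_density 0 (sqrt (1/2)))"
    and noiseIm: "\<And>i. distributed M lborel (\<lambda>\<omega>. Im (v i \<omega>)) (normal_density 0 (sqrt (1/2)))"
    and noiseIndep: "\<And>i. prob_space.indep_var M borel (\<lambda>\<omega>. Re (v i \<omega>)) borel (\<lambda>\<omega>. Im (v i \<omega>))"
    and flim: "\<And>Delta CV. Delta > 0 \<Longrightarrow> (\<forall>k. finite (CV k)) \<Longrightarrow>
                 filterlim (\<lambda>k. card (CV k)) at_top sequentially \<Longrightarrow>
                 conv_in_prob M
                   (\<lambda>k \<omega>. ell Delta (off Delta) (\<lambda>i j. A i j \<omega>) (\<lambda>i. v i \<omega>) h hh (CV k)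
                           / (2 * real (card (CV k))))
                   (f Delta)"
  shows "(\<lambda>Delta. f Delta - (- (norm (hh - h))\<^sup>2 - ln (pi * exp 1) / 2 + ln Delta))
           \<in> O[at_right 0](\<lambda>Delta. Delta)"
proof -
  interpret noisy_linear_model M A v
    by (intro noisy_linear_model.intro noisy_linear_model_axioms.intro assms)
  define m where "m = 2 * (norm (h - hh))\<^sup>2 + 1"
  have "ln (pi * exp 1) = ln pi + 1"
    by (simp add: ln_mult)
  then have target: "- (norm (hh - h))\<^sup>2 - ln (pi * exp 1) / 2 + ln D = ln D - ln pi / 2 - m / 2" for D
    by (simp add: m_def norm_minus_commute[of hh h] field_simps)
  have approx: "\<bar>f D - (ln D - ln pi / 2 - m / 2)\<bar> \<le> (2 + m / 2) * D" if D: "0 < D" "D < 1" for D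
  proof (unfold m_def, rule conv_in_prob_limit_approx[OF D])
    show "conv_in_prob M (\<lambda>k \<omega>. ell D (off D) (\<lambda>i j. A i j \<omega>) (\<lambda>i. v i \<omega>) h hh {..<k}
        / (2 * real k)) (f D)"
      using flim[OF D(1), of lessThan] by (simp add: filterlim_ident)
  qed
  show ?thesis
  proof (rule bigoI[where c = "2 + m / 2"])
    show "eventually (\<lambda>D. norm (f D - (- (norm (hh - h))\<^sup>2 - ln (pi * exp 1) / 2 + ln D))
        \<le> (2 + m / 2) * norm D) (at_right 0)"
      using eventually_at_right_real[OF zero_less_one]
      by eventually_elim (use approx in \<open>auto simp: target\<close>)
  qed
qed

end
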